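(* Let $\mathcal X=\{1,\dots,N\}$ with $N\ge2$, let $T\ge2$, let $\mathrm{PWS}$ be a piecewise stationary source for sequences of length $T$ with complexity $C_{\mathrm{PWS}}$, and let $u$ be the uniform distribution on $\mathcal X$. Let $\mathrm{PS}$ be the Probability Smoothing model with share factors $\varepsilon_t=\frac1{t+1}$, smoothing rates $\alpha_t=\exp\!\Big(-\sqrt{\frac{\log(N/\varepsilon_t)}{2Nt}}\Big)$, and an initial distribution $p$ with $p(x)\ge\frac{\varepsilon_1}{N-1}$ for all $x\in\mathcal X$. Then for every sequence $x_{1:T}\in\mathcal X^T$, \[ \ell_{\mathrm{PS}}(x_{1:T})\le\ell_{\mathrm{PWS}}(x_{1:T})+\sqrt{2N(T+1)\log(N(T+1))}\cdot(1+C_{\mathrm{PWS}})+\sqrt{\frac{128NT}{\log T}}+O(N\log T). \]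
   Context: All logarithms are natural, with $\log\frac10=+\infty$. A model maps each finite sequence $x_{1:t}$ over $\mathcal X$ (including the empty one) to a distribution on $\mathcal X$; $M(x;x_{1:t})$ denotes the probability of $x$. Code length: $\ell_M(x_{1:T})=\sum_{t=1}^T\log\frac1{M(x_t;x_{<t})}$ with $x_{<t}=x_{1:t-1}$. Probability Smoothing with parameters $(\alpha_{1:\infty},\varepsilon_{1:\infty},p)$: $\mathrm{PS}(\cdot;\text{empty})=p$, and for $t\ge1$, $\mathrm{PS}(x;x_{1:t})=\alpha_t\,\mathrm{PS}(x;x_{<t})+(1-\alpha_t)(1-\varepsilon_t)$ if $x=x_t$ and $=\alpha_t\,\mathrm{PS}(x;x_{<t})+(1-\alpha_t)\frac{\varepsilon_t}{N-1}$ if $x\ne x_t$. A piecewise stationary source (PWS) for length $T$ is given by a partition $\mathcal P$ of $\{1,\dots,T\}$ into consecutive integer intervals $[t_1,t_2),\dots,[t_n,t_{n+1})$ ($1=t_1<\dots<t_{n+1}=T+1$, $[i,j)=\{i,\dots,j-1\}$) and distributions $\{p_S\}_{S\in\mathcal P}$; $\ell_{\mathrm{PWS}}(x_{1:T})=\sum_{S\in\mathcal P}\sum_{t\in S}\log\frac1{p_S(x_t)}$. The transition set $\mathcal T$ consists of the triples $(t,A,B)$ with $A=[i,t)$, $B=[t,j)$ both in $\mathcal P$; the complexity is $C_{\mathrm{PWS}}=1+\sum_{(t,A,B)\in\mathcal T}\lVert p_B-p_A\rVert$ with $\lVert p-q\rVert=\sum_x|p(x)-q(x)|$. The term $O(N\log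 T)$ denotes a quantity (depending on $N$, $T$ and $p$) that, for fixed $N$, grows at most proportionally to $N\log T$ as $T\to\infty$. *)

theory Defs
  imports "HOL-Analysis.Analysis" "HOL-Library.Extended_Real"
begin

text \<open>Alphabet is {1..N}; sequences are functions xs :: nat => nat, with x_t = xs t for t = 1..T.\<close>

definition nlog :: "real \<Rightarrow> ereal" where
  "nlog q = (if q \<le> 0 then \<infinity> else ereal (ln (1 / q)))"

definition is_dist :: "nat \<Rightarrow> (nat \<Rightarrow> real) \<Rightarrow> bool" where
  "is_dist N p \<longleftrightarrow> (\<forall>x\<in>{1..N}. 0 \<le> p x) \<and> (\<Sum>x=1..N. p x) = 1"

text \<open>Probability Smoothing: PS_dist N alpha eps p xs t is the distribution PS(.; x_{1:t}).\<close>
fun PS_dist :: "nat \<Rightarrow> (nat \<Rightarrow> real) \<Rightarrow> (nat \<Rightarrow> real) \<Rightarrow> (nat \<Rightarrow> real) \<Rightarrow> (nat \<Rightarrow> nat)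
                 \<Rightarrow> nat \<Rightarrow> nat \<Rightarrow> real" where
  "PS_dist N alpha eps p xs 0 x = p x"
| "PS_dist N alpha eps p xs (Suc t) x =
     alpha (Suc t) * PS_dist N alpha eps p xs t x
     + (1 - alpha (Suc t)) *
       (if x = xs (Suc t) then 1 - eps (Suc t) else eps (Suc t) / (real N - 1))"

definition code_len_PS :: "nat \<Rightarrow> (nat \<Rightarrow> real) \<Rightarrow> (nat \<Rightarrow> real) \<Rightarrow> (nat \<Rightarrow> real)
                 \<Rightarrow> (nat \<Rightarrow> nat) \<Rightarrow> nat \<Rightarrow> ereal" where
  "code_len_PS N alpha eps p xs T =
     (\<Sum>t=1..T. nlog (PS_dist N alpha eps p xs (t - 1) (xs t)))"

definition is_PWS :: "nat \<Rightarrow> nat \<Rightarrow> nat \<Rightarrow> (nat \<Rightarrow> nat) \<Rightarrow> (nat \<Rightarrow> nat \<Rightarrow> real) \<Rightarrow> bool" where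
  "is_PWS N T n ts q \<longleftrightarrow> 1 \<le> n \<and> ts 1 = 1 \<and> ts (n + 1) = T + 1
     \<and> (\<forall>i\<in>{1..n}. ts i < ts (i + 1)) \<and> (\<forall>i\<in>{1..n}. is_dist N (q i))"

definition code_len_PWS :: "nat \<Rightarrow> (nat \<Rightarrow> nat) \<Rightarrow> (nat \<Rightarrow> nat \<Rightarrow> real) \<Rightarrow> (nat \<Rightarrow> nat) \<Rightarrow> ereal" where
  "code_len_PWS n ts q xs = (\<Sum>i=1..n. \<Sum>t\<in>{ts i..<ts (i + 1)}. nlog (q i (xs t)))"

definition complexity_PWS :: "nat \<Rightarrow> nat \<Rightarrow> (nat \<Rightarrow> nat \<Rightarrow> real) \<Rightarrow> real" where
  "complexity_PWS N n q = 1 + (\<Sum>i=1..n-1. \<Sum>x=1..N. \<bar>q (i + 1) x - q i x\<bar>)"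

definition eps_thm :: "nat \<Rightarrow> real" where
  "eps_thm t = 1 / (real t + 1)"

definition alpha_thm :: "nat \<Rightarrow> nat \<Rightarrow> real" where
  "alpha_thm N t = exp (- sqrt (ln (real N / eps_thm t) / (2 * real N * real t)))"

end

theory Submission
  imports Defs
begin

text \<open>
  Write P_t for the prediction after x_1..x_t and alpha_t = exp (- s_t). Since P_t >= alpha_t P_(t-1)
  pointwise, the cross entropy Phi_t(q) = sum_y q(y) log (1 / P_t(y)) of a fixed distribution q drops
  in step t by at least q(x_t) (log (P_t(x_t) / P_(t-1)(x_t)) + s_t) - s_t. An elementary inequality
  turns this into the per-step bound
    log (1 / P_(t-1)(x_t)) - log (1 / q(x_t)) <= c_t (Phi_(t-1)(q) - Phi_t(q)) + r_t,
  with c_t = 1 / (1 - alpha_t). Within a segment the potential c_t Phi_t(p_S) telescopes, the growth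
  of c_t costing at most c_T log (N (T + 1)) overall; at a transition it jumps by at most
  c_t log (N (t + 1)) / 2 times the L1 distance of the two segment distributions, because the
  smoothing keeps P_t >= eps_t / (N - 1) and hence every loss in [0, log (N (t + 1))]. The choice of
  s_t makes both c_t log (N (t + 1)) and N (s_1 + ... + s_T) of order sqrt (2 N T log (N T)), and
  the residuals r_t add only O(N log T).
\<close>

lemma sum_inverse_sqrt_le: "(\<Sum>t=1..T. 1 / sqrt (real t)) \<le> 2 * sqrt (real T)"
proof (induction T)
  case 0
  then show ?case by simp
next
  case (Suc T)
  have "sqrt (real T) * sqrt (real T + 1) = sqrt (real T * (real T + 1))"
    by (simp add: real_sqrt_mult)
  also have "\<dots> \<le> real T + 1/2"
    by (rule real_le_lsqrt) (auto simp: power2_eq_square algebra_simps)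
  finally have "1 \<le> (2 * sqrt (real T + 1) - 2 * sqrt (real T)) * sqrt (real T + 1)"
    by (simp add: algebra_simps)
  then have "1 / sqrt (real T + 1) \<le> 2 * sqrt (real T + 1) - 2 * sqrt (real T)"
    by (simp add: divide_le_eq)
  then show ?case using Suc by (simp add: add.commute)
qed

lemma sum_telescope_atLeast1:
  fixes g :: "nat \<Rightarrow> 'a::ab_group_add"
  shows "(\<Sum>t=1..T. g t - g (t - 1)) = g T - g 0"
  by (induction T) auto

lemma sum_diff_shift:
  fixes A B :: "nat \<Rightarrow> 'a::ab_group_add"
  shows "(\<Sum>i=1..Suc m. A i - B i) = A 1 - B (Suc m) + (\<Sum>i=1..m. A (i + 1) - B i)"
  by (induction m) (auto simp: algebra_simps)

lemma inverse_one_minus_exp_le: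
  fixes s :: real
  assumes "0 < s"
  shows "1 / (1 - exp (- s)) \<le> 1 + 1 / s"
proof -
  have "exp (- s) * (1 + s) \<le> exp (- s) * exp s"
    by (intro mult_left_mono) auto
  then have "s \<le> (1 - exp (- s)) * (1 + s)"
    by (simp add: exp_minus field_simps)
  moreover have "0 < 1 - exp (- s)" using assms by simp
  ultimately show ?thesis using assms by (simp add: field_simps)
qed

text \<open>One smoothing step in isolation: \<open>a\<close> is the previous probability of the observed symbol,
  \<open>w\<close> the factor by which it grows, \<open>u\<close> its probability under the comparator and \<open>G\<close> the decrease
  of the comparator's cross entropy.\<close>

lemma mixture_loss_step:
  fixes u a s e w G :: real
  assumes u: "0 < u" and a: "0 < a" and s: "0 < s" and e: "0 < e" "e < 1"
    and w: "w = exp (- s) + (1 - exp (- s)) * (1 - e) / a"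
    and G: "u * (ln w + s) - s \<le> G"
  shows "ln (1 / a) - ln (1 / u) \<le> G / (1 - exp (- s)) + ln w + s - ln (1 - e)"
proof -
  define \<beta> where "\<beta> = 1 - exp (- s)"
  define L where "L = ln w + s"
  have \<beta>: "0 < \<beta>" using s by (simp add: \<beta>_def)
  have w_gap: "w - exp (- s) = \<beta> * (1 - e) / a" using w by (simp add: \<beta>_def)
  have w_gap_pos: "0 < w - exp (- s)" unfolding w_gap using \<beta> e a by simp
  then have w_pos: "0 < w" using exp_gt_zero[of "- s"] by linarith
  have L_eq: "L = ln (w / exp (- s))" using w_pos by (simp add: L_def ln_div)
  have L_pos: "0 < L" unfolding L_eq using w_gap_pos by (intro ln_gt_zero) (simp add: field_simps)
  \<comment> \<open>Use \<open>ln x \<le> x - 1\<close> at \<open>x = u L / \<beta>\<close> and at \<open>x = exp (- s) / w\<close>, then \<open>s / \<beta> \<le> 1 + s\<close>.\<close>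
  have "ln (u * L / \<beta>) \<le> u * L / \<beta> - 1"
    using u L_pos \<beta> by (intro ln_le_minus_one) simp
  then have 1: "ln u + ln L - ln \<beta> \<le> u * L / \<beta> - 1"
    using u L_pos \<beta> by (simp add: ln_div ln_mult)
  have 2: "ln \<beta> - ln a = ln (w - exp (- s)) - ln (1 - e)"
    unfolding w_gap using \<beta> e a by (simp add: ln_div ln_mult)
  have "ln (exp (- s) / w) \<le> exp (- s) / w - 1"
    using w_pos by (intro ln_le_minus_one) simp
  moreover have "ln (exp (- s) / w) = - L" using w_pos by (simp add: L_eq ln_div)
  ultimately have "1 - exp (- s) / w \<le> L" by simp
  then have "w * (1 - exp (- s) / w) \<le> w * L" using w_pos by (intro mult_left_mono) auto
  then have "w - exp (- s) \<le> w * L" using w_pos by (simp add: right_diff_distrib)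
  then have "ln (w - exp (- s)) \<le> ln (w * L)" using w_gap_pos by (intro ln_mono) auto
  then have 3: "ln (w - exp (- s)) \<le> ln w + ln L" using w_pos L_pos by (simp add: ln_mult)
  have "s / \<beta> \<le> s * (1 + 1 / s)"
    using inverse_one_minus_exp_le[OF s] s by (simp add: \<beta>_def divide_inverse)
  then have 4: "s / \<beta> - s \<le> 1" using s by (simp add: algebra_simps)
  have 5: "u * L / \<beta> - s / \<beta> \<le> G / \<beta>"
    using G \<beta> by (simp add: L_def diff_divide_distrib[symmetric] divide_right_mono)
  have "ln (1 / a) - ln (1 / u) = ln u - ln a" using u a by (simp add: ln_div)
  also have "\<dots> \<le> G / \<beta> + ln w + s - ln (1 - e)" using 1 2 3 4 5 by linarith
  finally show ?thesis by (simp add: \<beta>_def)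
qed

lemma strict_increasing_add_diff_le:
  fixes ts :: "nat \<Rightarrow> nat"
  assumes inc: "\<forall>i\<in>{1..n}. ts i < ts (i + 1)" and ij: "1 \<le> i" "i \<le> j" "j \<le> n + 1"
  shows "ts i + (j - i) \<le> ts j"
  using ij
proof (induction j)
  case 0
  then show ?case by simp
next
  case (Suc j)
  show ?case
  proof (cases "i = Suc j")
    case False
    then have "i \<le> j" using Suc by simp
    moreover have "ts j < ts (j + 1)" using inc Suc \<open>i \<le> j\<close> by auto
    ultimately show ?thesis using Suc by simp
  qed simp
qed

lemma is_PWS_boundary_bounds:
  assumes "is_PWS N T n ts q" "1 \<le> i" "i \<le> n + 1"
  shows "i \<le> ts i" and "ts i + (n + 1 - i) \<le> T + 1"
  using assms strict_increasing_add_diff_le[of n ts 1 i] strict_increasing_add_diff_le[of n ts i "n + 1"]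
  unfolding is_PWS_def by auto

lemma sum_over_segments:
  fixes f :: "nat \<Rightarrow> 'a::comm_monoid_add" and m :: nat
  assumes inc: "\<forall>i\<in>{1..n}. ts i < ts (i + 1)" and ts1: "ts 1 = 1"
  shows "m \<le> n \<Longrightarrow> (\<Sum>i=1..m. \<Sum>t\<in>{ts i..<ts (i + 1)}. f t) = (\<Sum>t\<in>{1..<ts (m + 1)}. f t)"
proof (induction m)
  case 0
  then show ?case using ts1 by simp
next
  case (Suc m)
  have "1 \<le> ts (Suc m)" using strict_increasing_add_diff_le[OF inc, of 1 "Suc m"] Suc ts1 by simp
  moreover have "ts (Suc m) \<le> ts (Suc m + 1)" using inc Suc by (auto intro: less_imp_le)
  ultimately show ?case using Suc by (simp add: sum.atLeastLessThan_concat)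
qed

lemma sum_over_PWS_segments:
  fixes f :: "nat \<Rightarrow> 'a::comm_monoid_add"
  assumes "is_PWS N T n ts q"
  shows "(\<Sum>i=1..n. \<Sum>t\<in>{ts i..<ts (i + 1)}. f t) = (\<Sum>t=1..T. f t)"
proof -
  have "(\<Sum>i=1..n. \<Sum>t\<in>{ts i..<ts (i + 1)}. f t) = (\<Sum>t\<in>{1..<ts (n + 1)}. f t)"
    using assms sum_over_segments[of n ts n f] unfolding is_PWS_def by auto
  also have "{1..<ts (n + 1)} = {1..T}" using assms unfolding is_PWS_def by auto
  finally show ?thesis .
qed

lemma code_len_PWS_finite:
  assumes "\<forall>i\<in>{1..n}. \<forall>t\<in>{ts i..<ts (i + 1)}. 0 < q i (xs t)"
  shows "code_len_PWS n ts q xs = ereal (\<Sum>i=1..n. \<Sum>t\<in>{ts i..<ts (i + 1)}. ln (1 / q i (xs t)))"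
proof -
  have "code_len_PWS n ts q xs = (\<Sum>i=1..n. \<Sum>t\<in>{ts i..<ts (i + 1)}. ereal (ln (1 / q i (xs t))))"
    unfolding code_len_PWS_def
  proof (intro sum.cong refl)
    fix i t assume "i \<in> {1..n}" "t \<in> {ts i..<ts (i + 1)}"
    then have "0 < q i (xs t)" using assms by blast
    then show "nlog (q i (xs t)) = ereal (ln (1 / q i (xs t)))" by (simp add: nlog_def)
  qed
  then show ?thesis by simp
qed

lemma code_len_PWS_infinite:
  assumes "i \<in> {1..n}" "t \<in> {ts i..<ts (i + 1)}" "\<not> 0 < q i (xs t)"
  shows "code_len_PWS n ts q xs = \<infinity>"
proof -
  have "(\<Sum>t\<in>{ts i..<ts (i + 1)}. nlog (q i (xs t))) = \<infinity>"
    using assms by (subst sum_Pinfty) (auto simp: nlog_def intro!: bexI[of _ t])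
  then show ?thesis unfolding code_len_PWS_def using assms by (subst sum_Pinfty) auto
qed

lemma log_terms_le:
  fixes N T :: nat and S :: real
  assumes N: "2 \<le> N" and T: "2 \<le> T" and S: "S \<le> real N * ln (2 * real N)"
  shows "ln (real N * (real T + 1)) + ln (real T + 1) + S
     \<le> sqrt (128 * real N * real T / ln (real T)) + (4 + 2 * ln (2 * real N) / ln 2) * real N * ln (real T)"
proof -
  have lnT: "ln 2 \<le> ln (real T)" using T by simp
  have lnT_pos: "0 < ln (real T)" using T by simp
  have lnN: "0 \<le> ln (2 * real N)" using N by simp
  have "2 * real T \<le> real T * real T" using T by (intro mult_right_mono) auto
  then have "real T + 1 \<le> real T * real T" using T by linarith
  then have "ln (real T + 1) \<le> ln (real T * real T)" using T by (intro ln_mono) auto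
  then have lnT1: "ln (real T + 1) \<le> 2 * ln (real T)" using T by (simp add: ln_mult)
  have "ln (real N * (real T + 1)) \<le> ln (2 * real N) + ln (real T + 1)"
    using N by (simp add: ln_mult)
  moreover have "ln (2 * real N) \<le> real N * ln (2 * real N)"
    using N lnN by (simp add: mult_le_cancel_right1)
  ultimately have "ln (real N * (real T + 1)) + ln (real T + 1) + S \<le> 4 * ln (real T) + 2 * real N * ln (2 * real N)"
    using lnT1 S by linarith
  also have "\<dots> \<le> (4 + 2 * ln (2 * real N) / ln 2) * real N * ln (real T)"
  proof -
    have "4 * ln (real T) \<le> 4 * real N * ln (real T)" using N lnT_pos by simp
    moreover have "2 * real N * ln (2 * real N) * 1 \<le> 2 * real N * ln (2 * real N) * (ln (real T) / ln 2)"
      using lnT lnN by (intro mult_left_mono) auto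
    ultimately show ?thesis by (simp add: algebra_simps)
  qed
  finally have "ln (real N * (real T + 1)) + ln (real T + 1) + S
     \<le> (4 + 2 * ln (2 * real N) / ln 2) * real N * ln (real T)" .
  moreover have "0 \<le> sqrt (128 * real N * real T / ln (real T))" using lnT_pos by simp
  ultimately show ?thesis by linarith
qed

lemma eps_thm_antimono: "m \<le> n \<Longrightarrow> eps_thm n \<le> eps_thm m"
  unfolding eps_thm_def by (simp add: frac_le)

lemma sum_ln_one_minus_eps: "(\<Sum>t=1..T. - ln (1 - eps_thm t)) = ln (real T + 1)"
proof -
  have "(\<Sum>t=1..T. - ln (1 - eps_thm t)) = (\<Sum>t=1..T. ln (real t + 1) - ln (real (t - 1) + 1))"
  proof (rule sum.cong[OF refl])
    fix t assume "t \<in> {1..T}"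
    moreover have "1 - eps_thm t = real t / (real t + 1)" by (simp add: eps_thm_def field_simps)
    ultimately show "- ln (1 - eps_thm t) = ln (real t + 1) - ln (real (t - 1) + 1)"
      by (simp add: ln_div of_nat_diff)
  qed
  also have "\<dots> = ln (real T + 1) - ln (real 0 + 1)" by (rule sum_telescope_atLeast1)
  finally show ?thesis by simp
qed

locale probability_smoothing =
  fixes N :: nat and p :: "nat \<Rightarrow> real" and xs :: "nat \<Rightarrow> nat"
  assumes N_ge_2: "2 \<le> N" and p_dist: "is_dist N p"
    and p_lower: "\<forall>x\<in>{1..N}. eps_thm 1 / (real N - 1) \<le> p x"
begin

definition PS :: "nat \<Rightarrow> nat \<Rightarrow> real" where
  "PS = PS_dist N (alpha_thm N) eps_thm p xs"

text \<open>\<open>log_bound t\<close> is \<open>log (N / \<epsilon>\<^sub>t)\<close>, and \<open>\<alpha>\<^sub>t = exp (- rate t)\<close>.\<close>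

definition log_bound :: "nat \<Rightarrow> real" where
  "log_bound t = ln (real N * (real t + 1))"

definition rate :: "nat \<Rightarrow> real" where
  "rate t = sqrt (log_bound t / (2 * real N * real t))"

definition weight :: "nat \<Rightarrow> real" where
  "weight t = 1 / (1 - exp (- rate t))"

definition cross_ent :: "nat \<Rightarrow> (nat \<Rightarrow> real) \<Rightarrow> real" where
  "cross_ent t q = (\<Sum>y=1..N. q y * ln (1 / PS t y))"

definition K :: "nat \<Rightarrow> real" where
  "K T = sqrt (2 * real N * (real T + 1) * log_bound T)"

lemma log_bound_mono: "t \<le> u \<Longrightarrow> log_bound t \<le> log_bound u"
  unfolding log_bound_def using N_ge_2 by (intro ln_mono mult_left_mono) auto

lemma log_bound_ge_1: "1 \<le> t \<Longrightarrow> 1 \<le> log_bound t"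
proof -
  assume "1 \<le> t"
  then have "real N * 2 \<le> real N * (real t + 1)" by (intro mult_left_mono) auto
  then have "exp 1 \<le> real N * (real t + 1)" using N_ge_2 exp_le by linarith
  then have "ln (exp 1) \<le> log_bound t" unfolding log_bound_def by (intro ln_mono) auto
  then show ?thesis by simp
qed

lemma log_bound_pos: "0 < log_bound t"
proof -
  have "real N * 1 \<le> real N * (real t + 1)" by (intro mult_left_mono) auto
  then have "1 < real N * (real t + 1)" using N_ge_2 by linarith
  then show ?thesis unfolding log_bound_def by simp
qed

lemma rate_nonneg: "0 \<le> rate t"
  using log_bound_pos[of t] unfolding rate_def by simp

lemma rate_pos: "1 \<le> t \<Longrightarrow> 0 < rate t"
  using log_bound_pos[of t] N_ge_2 unfolding rate_def by simp

lemma alpha_thm_eq: "alpha_thm N t = exp (- rate t)"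
  unfolding alpha_thm_def rate_def log_bound_def eps_thm_def by simp

lemma PS_0: "PS 0 y = p y"
  by (simp add: PS_def)

lemma PS_Suc:
  "PS (Suc t) y = exp (- rate (Suc t)) * PS t y + (1 - exp (- rate (Suc t))) *
     (if y = xs (Suc t) then 1 - eps_thm (Suc t) else eps_thm (Suc t) / (real N - 1))"
  unfolding PS_def by (simp add: alpha_thm_eq)

lemma eps_share_pos: "0 < eps_thm t / (real N - 1)"
  using N_ge_2 by (simp add: eps_thm_def)

lemma smoothing_target_bounds:
  assumes "1 \<le> t"
  shows "eps_thm t / (real N - 1) \<le> (if b then 1 - eps_thm t else eps_thm t / (real N - 1))"
    and "(if b then 1 - eps_thm t else eps_thm t / (real N - 1)) \<le> 1"
proof -
  have eps: "0 < eps_thm t" "eps_thm t \<le> 1 / 2"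
    using assms eps_thm_antimono[OF assms] by (auto simp: eps_thm_def)
  have "eps_thm t / (real N - 1) \<le> eps_thm t" using N_ge_2 eps by (simp add: divide_le_eq)
  then show "eps_thm t / (real N - 1) \<le> (if b then 1 - eps_thm t else eps_thm t / (real N - 1))"
    and "(if b then 1 - eps_thm t else eps_thm t / (real N - 1)) \<le> 1"
    using eps by auto
qed

lemma PS_bounds:
  assumes y: "y \<in> {1..N}"
  shows "eps_thm (max 1 t) / (real N - 1) \<le> PS t y \<and> PS t y \<le> 1"
proof (induction t)
  case 0
  have "p y \<le> (\<Sum>x=1..N. p x)"
    using p_dist y unfolding is_dist_def by (intro member_le_sum) auto
  then show ?case using p_dist p_lower y by (simp add: PS_0 is_dist_def)
next
  case (Suc t)
  define a where "a = exp (- rate (Suc t))"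
  define e where "e = (if y = xs (Suc t) then 1 - eps_thm (Suc t) else eps_thm (Suc t) / (real N - 1))"
  define lb where "lb = eps_thm (Suc t) / (real N - 1)"
  have a: "0 \<le> a" "a \<le> 1" using rate_nonneg[of "Suc t"] by (auto simp: a_def)
  have e: "lb \<le> e" "e \<le> 1" using smoothing_target_bounds[of "Suc t"] by (auto simp: e_def lb_def)
  have "eps_thm (Suc t) \<le> eps_thm (max 1 t)" by (rule eps_thm_antimono) simp
  then have "lb \<le> eps_thm (max 1 t) / (real N - 1)"
    using N_ge_2 unfolding lb_def by (intro divide_right_mono) auto
  then have "lb \<le> PS t y" using Suc.IH by linarith
  then have "a * lb + (1 - a) * lb \<le> a * PS t y + (1 - a) * e"
    using a e by (intro add_mono mult_left_mono) auto
  moreover have "a * PS t y + (1 - a) * e \<le> 1"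
    using Suc.IH a e by (intro convex_bound_le) auto
  moreover have "PS (Suc t) y = a * PS t y + (1 - a) * e" by (simp add: PS_Suc a_def e_def)
  moreover have "a * lb + (1 - a) * lb = lb" by (simp add: algebra_simps)
  moreover have "max 1 (Suc t) = Suc t" by simp
  ultimately show ?case unfolding lb_def by linarith
qed

lemma PS_pos: "y \<in> {1..N} \<Longrightarrow> 0 < PS t y"
  using PS_bounds[of y t] eps_share_pos[of "max 1 t"] by linarith

lemma loss_bounds:
  assumes y: "y \<in> {1..N}"
  shows "0 \<le> ln (1 / PS t y) \<and> ln (1 / PS t y) \<le> log_bound (max 1 t)"
proof -
  have pos: "0 < PS t y" by (rule PS_pos[OF y])
  have "1 / PS t y \<le> 1 / (eps_thm (max 1 t) / (real N - 1))"
    using PS_bounds[OF y, of t] eps_share_pos by (intro frac_le) auto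
  also have "\<dots> = (real N - 1) * (real (max 1 t) + 1)" by (simp add: eps_thm_def)
  also have "\<dots> \<le> real N * (real (max 1 t) + 1)" by (intro mult_right_mono) auto
  finally have "ln (1 / PS t y) \<le> log_bound (max 1 t)"
    unfolding log_bound_def using pos by (intro ln_mono) auto
  then show ?thesis using pos PS_bounds[OF y, of t] by simp
qed

lemma cross_ent_bounds:
  assumes q: "is_dist N q"
  shows "0 \<le> cross_ent t q \<and> cross_ent t q \<le> log_bound (max 1 t)"
proof -
  have "cross_ent t q \<le> (\<Sum>y=1..N. q y * log_bound (max 1 t))" unfolding cross_ent_def
    using q loss_bounds unfolding is_dist_def by (intro sum_mono mult_left_mono) auto
  also have "\<dots> = log_bound (max 1 t)"
    using q unfolding is_dist_def by (simp flip: sum_distrib_right)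
  finally show ?thesis
    using q loss_bounds unfolding cross_ent_def is_dist_def by (auto intro: sum_nonneg)
qed

lemma cross_ent_diff_le:
  assumes q: "is_dist N q" and q': "is_dist N q'"
  shows "cross_ent t q' - cross_ent t q \<le> log_bound (max 1 t) / 2 * (\<Sum>y=1..N. \<bar>q' y - q y\<bar>)"
proof -
  define M where "M = log_bound (max 1 t) / 2"
  \<comment> \<open>Centering the losses at \<open>M\<close> costs nothing because \<open>q' - q\<close> sums to zero.\<close>
  have "(\<Sum>y=1..N. (q' y - q y) * M) = 0"
    using q q' unfolding is_dist_def by (simp add: sum_subtractf flip: sum_distrib_right)
  moreover have "cross_ent t q' - cross_ent t q = (\<Sum>y=1..N. (q' y - q y) * ln (1 / PS t y))"
    unfolding cross_ent_def by (simp add: left_diff_distrib sum_subtractf)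
  moreover have "(\<Sum>y=1..N. (q' y - q y) * (ln (1 / PS t y) - M))
      = (\<Sum>y=1..N. (q' y - q y) * ln (1 / PS t y)) - (\<Sum>y=1..N. (q' y - q y) * M)"
    by (simp only: right_diff_distrib sum_subtractf)
  ultimately have "cross_ent t q' - cross_ent t q = (\<Sum>y=1..N. (q' y - q y) * (ln (1 / PS t y) - M))"
    by simp
  also have "\<dots> \<le> (\<Sum>y=1..N. \<bar>q' y - q y\<bar> * M)"
  proof (rule sum_mono)
    fix y assume "y \<in> {1..N}"
    then have "\<bar>ln (1 / PS t y) - M\<bar> \<le> M"
      using loss_bounds[of y t] unfolding M_def abs_le_iff by linarith
    then have "\<bar>(q' y - q y) * (ln (1 / PS t y) - M)\<bar> \<le> \<bar>q' y - q y\<bar> * M"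
      by (simp add: abs_mult mult_left_mono)
    then show "(q' y - q y) * (ln (1 / PS t y) - M) \<le> \<bar>q' y - q y\<bar> * M" by linarith
  qed
  finally show ?thesis by (simp add: M_def sum_distrib_left mult.commute)
qed

lemma ln_PS_ratio_ge:
  assumes y: "y \<in> {1..N}"
  shows "- rate (Suc t) \<le> ln (PS (Suc t) y / PS t y)"
proof -
  have "0 \<le> (if y = xs (Suc t) then 1 - eps_thm (Suc t) else eps_thm (Suc t) / (real N - 1))"
    using smoothing_target_bounds(1)[of "Suc t" "y = xs (Suc t)"] eps_share_pos[of "Suc t"] by simp
  then have "exp (- rate (Suc t)) * PS t y \<le> PS (Suc t) y"
    unfolding PS_Suc using rate_nonneg[of "Suc t"] by (intro add_increasing2 mult_nonneg_nonneg) auto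
  then have "exp (- rate (Suc t)) \<le> PS (Suc t) y / PS t y"
    using PS_pos[OF y] by (simp add: field_simps)
  then have "ln (exp (- rate (Suc t))) \<le> ln (PS (Suc t) y / PS t y)" by (intro ln_mono) auto
  then show ?thesis by simp
qed

lemma cross_ent_decrease:
  assumes q: "is_dist N q" and x: "xs (Suc t) \<in> {1..N}"
  shows "q (xs (Suc t)) * (ln (PS (Suc t) (xs (Suc t)) / PS t (xs (Suc t))) + rate (Suc t)) - rate (Suc t)
         \<le> cross_ent t q - cross_ent (Suc t) q"
proof -
  define D where "D y = ln (PS (Suc t) y / PS t y) + rate (Suc t)" for y
  have "cross_ent t q - cross_ent (Suc t) q = (\<Sum>y=1..N. q y * (D y - rate (Suc t)))"
    unfolding cross_ent_def sum_subtractf[symmetric]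
  proof (rule sum.cong[OF refl])
    fix y assume "y \<in> {1..N}"
    then have "0 < PS t y" "0 < PS (Suc t) y" using PS_pos by auto
    then show "q y * ln (1 / PS t y) - q y * ln (1 / PS (Suc t) y) = q y * (D y - rate (Suc t))"
      unfolding D_def by (simp add: ln_div algebra_simps)
  qed
  also have "\<dots> = (\<Sum>y=1..N. q y * D y) - rate (Suc t)"
    using q unfolding is_dist_def by (simp add: right_diff_distrib sum_subtractf flip: sum_distrib_right)
  finally have eq: "cross_ent t q - cross_ent (Suc t) q = (\<Sum>y=1..N. q y * D y) - rate (Suc t)" .
  have "q (xs (Suc t)) * D (xs (Suc t)) \<le> (\<Sum>y=1..N. q y * D y)"
  proof (rule member_le_sum[OF x])
    fix y assume "y \<in> {1..N} - {xs (Suc t)}"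
    then show "0 \<le> q y * D y"
      using q ln_PS_ratio_ge[of y t] unfolding is_dist_def D_def by simp
  qed simp
  then show ?thesis unfolding eq D_def by linarith
qed

lemma rate_antimono:
  assumes t: "1 \<le> t"
  shows "rate (Suc t) \<le> rate t"
proof -
  have "log_bound (Suc t) = log_bound t + ln ((real t + 2) / (real t + 1))"
    unfolding log_bound_def using N_ge_2 by (simp add: ln_mult ln_div add.commute)
  also have "ln ((real t + 2) / (real t + 1)) \<le> 1 / (real t + 1)"
    using ln_le_minus_one[of "(real t + 2) / (real t + 1)"] by (simp add: field_simps)
  finally have "real t * log_bound (Suc t) \<le> real t * (log_bound t + 1 / (real t + 1))"
    by (simp add: mult_left_mono)
  also have "\<dots> = real t * log_bound t + real t / (real t + 1)" by (simp add: distrib_left)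
  also have "\<dots> \<le> real t * log_bound t + log_bound t"
  proof -
    have "real t / (real t + 1) \<le> 1" by simp
    then show ?thesis using log_bound_ge_1[OF t] by linarith
  qed
  finally have key: "real t * log_bound (Suc t) \<le> real (Suc t) * log_bound t"
    by (simp add: algebra_simps)
  have den: "real t * (2 * real N * real (Suc t)) = real (Suc t) * (2 * real N * real t)"
    by (simp add: algebra_simps)
  have "log_bound (Suc t) / (2 * real N * real (Suc t))
      = (real t * log_bound (Suc t)) / (real t * (2 * real N * real (Suc t)))"
    using t by simp
  also have "\<dots> \<le> (real (Suc t) * log_bound t) / (real t * (2 * real N * real (Suc t)))"
    using key t N_ge_2 by (intro divide_right_mono) auto
  also have "\<dots> = log_bound t / (2 * real N * real t)"
    unfolding den by simp
  finally show ?thesis unfolding rate_def by simp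
qed

lemma weight_pos: "1 \<le> t \<Longrightarrow> 0 < weight t"
  using rate_pos[of t] by (simp add: weight_def)

lemma weight_mono:
  assumes "1 \<le> t"
  shows "weight t \<le> weight (Suc t)"
proof -
  have "exp (- rate t) \<le> exp (- rate (Suc t))" using rate_antimono[OF assms] by simp
  moreover have "exp (- rate (Suc t)) < 1" using rate_pos[of "Suc t"] by simp
  ultimately show ?thesis unfolding weight_def by (intro divide_left_mono mult_pos_pos) auto
qed

lemma log_bound_div_rate:
  assumes "1 \<le> t"
  shows "log_bound t / rate t = sqrt (2 * real N * real t * log_bound t)"
proof -
  have "rate t * sqrt (2 * real N * real t * log_bound t)
      = sqrt (log_bound t / (2 * real N * real t) * (2 * real N * real t * log_bound t))"
    unfolding rate_def by (rule real_sqrt_mult[symmetric])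
  also have "\<dots> = log_bound t"
    using assms N_ge_2 log_bound_pos[of t] by (simp add: power2_eq_square[symmetric])
  finally show ?thesis using rate_pos[OF assms] by (simp add: field_simps)
qed

lemma log_bound_le_sqrt:
  assumes "1 \<le> t"
  shows "log_bound t \<le> sqrt (2 * real N * real t * log_bound t)"
proof (rule real_le_rsqrt)
  have "log_bound t \<le> real N * (real t + 1) - 1"
    unfolding log_bound_def using N_ge_2 by (intro ln_le_minus_one) auto
  also have "\<dots> \<le> 2 * real N * real t"
    using assms mult_left_mono[of 1 "real t" "real N"] by (simp add: algebra_simps)
  finally show "(log_bound t)\<^sup>2 \<le> 2 * real N * real t * log_bound t"
    using log_bound_pos[of t] by (simp add: power2_eq_square mult_right_mono)
qed

lemma weight_mult_log_bound_le:
  assumes "1 \<le> t"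
  shows "weight t * log_bound t \<le> log_bound t + sqrt (2 * real N * real t * log_bound t)"
proof -
  have "weight t * log_bound t \<le> (1 + 1 / rate t) * log_bound t"
    using inverse_one_minus_exp_le[OF rate_pos[OF assms]] log_bound_pos[of t]
    unfolding weight_def by (intro mult_right_mono) auto
  also have "\<dots> = log_bound t + log_bound t / rate t" by (simp add: algebra_simps)
  finally show ?thesis using log_bound_div_rate[OF assms] by simp
qed

lemma sqrt_le_K:
  assumes "m \<le> T"
  shows "sqrt (2 * real N * real m * log_bound m) \<le> K T"
proof -
  have "2 * real N * real m * log_bound m \<le> 2 * real N * (real T + 1) * log_bound T"
    using assms log_bound_mono[OF assms] log_bound_pos[of m] by (intro mult_mono) auto
  then show ?thesis unfolding K_def by simp
qed

lemma sum_rate_le: "real N * (\<Sum>t=1..T. rate t) \<le> K T"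
proof -
  define A where "A = log_bound T / (2 * real N)"
  have A: "0 \<le> A" using log_bound_pos[of T] by (simp add: A_def)
  have "(\<Sum>t=1..T. rate t) \<le> (\<Sum>t=1..T. sqrt A * (1 / sqrt (real t)))"
  proof (rule sum_mono)
    fix t assume t: "t \<in> {1..T}"
    have "log_bound t / (2 * real N * real t) \<le> log_bound T / (2 * real N * real t)"
      using log_bound_mono[of t T] t by (intro divide_right_mono) auto
    then have "rate t \<le> sqrt (log_bound T / (2 * real N * real t))"
      unfolding rate_def by (rule real_sqrt_le_mono)
    also have "\<dots> = sqrt A * (1 / sqrt (real t))"
      unfolding A_def by (simp add: real_sqrt_divide real_sqrt_mult)
    finally show "rate t \<le> sqrt A * (1 / sqrt (real t))" .
  qed
  also have "\<dots> = sqrt A * (\<Sum>t=1..T. 1 / sqrt (real t))" by (rule sum_distrib_left[symmetric])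
  also have "\<dots> \<le> sqrt A * (2 * sqrt (real T))"
    using sum_inverse_sqrt_le A by (intro mult_left_mono) auto
  finally have "real N * (\<Sum>t=1..T. rate t) \<le> real N * (sqrt A * (2 * sqrt (real T)))"
    by (intro mult_left_mono) auto
  also have "\<dots> \<le> K T" unfolding K_def
  proof (rule real_le_rsqrt)
    have "(real N * (sqrt A * (2 * sqrt (real T))))\<^sup>2 = (real N)\<^sup>2 * A * 4 * real T"
      using A by (simp add: power_mult_distrib)
    also have "\<dots> = 2 * real N * real T * log_bound T"
      using N_ge_2 by (simp add: A_def power2_eq_square)
    also have "\<dots> \<le> 2 * real N * (real T + 1) * log_bound T"
      using log_bound_pos[of T] by (intro mult_right_mono mult_left_mono) auto
    finally show "(real N * (sqrt A * (2 * sqrt (real T))))\<^sup>2 \<le> 2 * real N * (real T + 1) * log_bound T" .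
  qed
  finally show ?thesis .
qed

lemma sum_ln_PS_ratio_le:
  assumes xs: "\<forall>t\<in>{1..T}. xs t \<in> {1..N}"
  shows "(\<Sum>t=1..T. ln (PS t (xs t) / PS (t - 1) (xs t)))
          \<le> (\<Sum>y=1..N. ln (1 / p y)) + (real N - 1) * (\<Sum>t=1..T. rate t)"
proof -
  \<comment> \<open>The log-probability of every other symbol drops by at most \<open>rate t\<close>.\<close>
  have step: "ln (PS t (xs t) / PS (t - 1) (xs t))
      \<le> (\<Sum>y=1..N. ln (PS t y) - ln (PS (t - 1) y)) + (real N - 1) * rate t"
    if t: "t \<in> {1..T}" for t
  proof -
    obtain k where k: "t = Suc k" using t by (cases t) auto
    have x: "xs t \<in> {1..N}" using xs t by auto
    define R where "R y = ln (PS (Suc k) y / PS k y)" for y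
    have "(\<Sum>y=1..N. ln (PS t y) - ln (PS (t - 1) y)) = (\<Sum>y=1..N. R y)"
    proof (rule sum.cong[OF refl])
      fix y assume y: "y \<in> {1..N}"
      show "ln (PS t y) - ln (PS (t - 1) y) = R y"
        using PS_pos[OF y, of k] PS_pos[OF y, of "Suc k"] k by (simp add: R_def ln_div)
    qed
    also have "\<dots> = R (xs t) + (\<Sum>y\<in>{1..N} - {xs t}. R y)"
      using x by (simp add: sum.remove)
    finally have sum_R: "(\<Sum>y=1..N. ln (PS t y) - ln (PS (t - 1) y)) = R (xs t) + (\<Sum>y\<in>{1..N} - {xs t}. R y)" .
    have "(\<Sum>y\<in>{1..N} - {xs t}. - rate t) \<le> (\<Sum>y\<in>{1..N} - {xs t}. R y)"
      unfolding R_def k by (intro sum_mono ln_PS_ratio_ge) auto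
    moreover have "(\<Sum>y\<in>{1..N} - {xs t}. - rate t) = - (real N - 1) * rate t"
      using x N_ge_2 by (simp add: card_Diff_singleton of_nat_diff algebra_simps)
    moreover have "ln (PS t (xs t) / PS (t - 1) (xs t)) = R (xs t)" using k by (simp add: R_def)
    ultimately show ?thesis using sum_R by linarith
  qed
  have "(\<Sum>t=1..T. ln (PS t (xs t) / PS (t - 1) (xs t)))
        \<le> (\<Sum>t=1..T. (\<Sum>y=1..N. ln (PS t y) - ln (PS (t - 1) y)) + (real N - 1) * rate t)"
    using step by (rule sum_mono)
  also have "\<dots> = (\<Sum>y=1..N. \<Sum>t=1..T. ln (PS t y) - ln (PS (t - 1) y)) + (real N - 1) * (\<Sum>t=1..T. rate t)"
    by (simp add: sum.distrib sum_distrib_left) (rule sum.swap)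
  also have "(\<Sum>y=1..N. \<Sum>t=1..T. ln (PS t y) - ln (PS (t - 1) y)) = (\<Sum>y=1..N. ln (PS T y) - ln (p y))"
  proof (rule sum.cong[OF refl])
    fix y
    show "(\<Sum>t=1..T. ln (PS t y) - ln (PS (t - 1) y)) = ln (PS T y) - ln (p y)"
      using sum_telescope_atLeast1[of "\<lambda>t. ln (PS t y)" T] by (simp add: PS_0)
  qed
  also have "\<dots> \<le> (\<Sum>y=1..N. ln (1 / p y))"
  proof (rule sum_mono)
    fix y assume y: "y \<in> {1..N}"
    have "ln (PS T y) \<le> 0" using PS_pos[OF y] PS_bounds[OF y, of T] by simp
    moreover have "0 < p y" using PS_pos[OF y, of 0] by (simp add: PS_0)
    ultimately show "ln (PS T y) - ln (p y) \<le> ln (1 / p y)" by (simp add: ln_div)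
  qed
  finally show ?thesis by simp
qed

definition residual :: "nat \<Rightarrow> real" where
  "residual t = ln (PS t (xs t) / PS (t - 1) (xs t)) + rate t - ln (1 - eps_thm t)"

lemma sum_residual_le:
  assumes xs: "\<forall>t\<in>{1..T}. xs t \<in> {1..N}"
  shows "(\<Sum>t=1..T. residual t) \<le> (\<Sum>y=1..N. ln (1 / p y)) + K T + ln (real T + 1)"
proof -
  have "(\<Sum>t=1..T. residual t)
      = (\<Sum>t=1..T. ln (PS t (xs t) / PS (t - 1) (xs t))) + (\<Sum>t=1..T. rate t) + (\<Sum>t=1..T. - ln (1 - eps_thm t))"
    unfolding residual_def by (simp add: sum.distrib sum_subtractf sum_negf)
  also have "\<dots> \<le> (\<Sum>y=1..N. ln (1 / p y)) + real N * (\<Sum>t=1..T. rate t) + ln (real T + 1)"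
    using sum_ln_PS_ratio_le[OF xs] sum_ln_one_minus_eps[of T] by (simp add: algebra_simps)
  also have "\<dots> \<le> (\<Sum>y=1..N. ln (1 / p y)) + K T + ln (real T + 1)"
    using sum_rate_le[of T] by simp
  finally show ?thesis .
qed

text \<open>Truncated at the horizon \<open>T\<close>, so that it vanishes after the last symbol and telescoping
  over the segments leaves no final term.\<close>

definition potential :: "nat \<Rightarrow> nat \<Rightarrow> (nat \<Rightarrow> real) \<Rightarrow> real" where
  "potential T t q = (if t < T then weight (Suc t) * cross_ent t q else 0)"

definition weight_incr :: "nat \<Rightarrow> nat \<Rightarrow> real" where
  "weight_incr T t = (if t < T then weight (Suc t) - weight t else 0)"

lemma sum_weight_incr:
  assumes "1 \<le> T"
  shows "(\<Sum>t=1..T. weight_incr T t) = weight T - weight 1"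
proof -
  obtain m where m: "T = Suc m" using assms by (cases T) auto
  have "(\<Sum>t=1..T. weight_incr T t) = (\<Sum>t=1..m. weight (Suc t) - weight t)"
    using m by (simp add: weight_incr_def)
  also have "\<dots> = weight T - weight 1" using m by (simp add: sum_Suc_diff)
  finally show ?thesis .
qed

lemma regret_step:
  assumes t: "1 \<le> t" "t \<le> T" and q: "is_dist N q" and x: "xs t \<in> {1..N}" and u: "0 < q (xs t)"
  shows "ln (1 / PS (t - 1) (xs t)) - ln (1 / q (xs t))
     \<le> potential T (t - 1) q - potential T t q + log_bound T * weight_incr T t + residual t"
proof -
  obtain k where k: "t = Suc k" using t by (cases t) auto
  define a where "a = PS k (xs t)"
  define w where "w = PS t (xs t) / a"
  have a: "0 < a" using PS_pos[OF x] by (simp add: a_def)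
  have eps: "0 < eps_thm t" "eps_thm t < 1" using t by (auto simp: eps_thm_def)
  have "PS t (xs t) = exp (- rate t) * a + (1 - exp (- rate t)) * (1 - eps_thm t)"
    unfolding a_def k PS_Suc by simp
  then have w_eq: "w = exp (- rate t) + (1 - exp (- rate t)) * (1 - eps_thm t) / a"
    using a unfolding w_def by (simp add: field_simps)
  have "q (xs t) * (ln w + rate t) - rate t \<le> cross_ent k q - cross_ent t q"
    using cross_ent_decrease[OF q, of k] x k unfolding w_def a_def by simp
  from mixture_loss_step[OF u a rate_pos[OF t(1)] eps w_eq this]
  have main: "ln (1 / a) - ln (1 / q (xs t))
      \<le> weight t * cross_ent k q - weight t * cross_ent t q + ln w + rate t - ln (1 - eps_thm t)"
    by (simp add: weight_def diff_divide_distrib)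
  have "weight t * cross_ent k q - weight t * cross_ent t q
      \<le> potential T k q - potential T t q + log_bound T * weight_incr T t"
  proof (cases "t < T")
    case True
    have "cross_ent t q \<le> log_bound T"
      using cross_ent_bounds[OF q, of t] log_bound_mono[OF t(2)] t by (simp add: max_def)
    moreover have "0 \<le> weight (Suc t) - weight t" using weight_mono[OF t(1)] by simp
    ultimately have "(weight (Suc t) - weight t) * cross_ent t q \<le> (weight (Suc t) - weight t) * log_bound T"
      by (intro mult_left_mono)
    then show ?thesis using True k by (simp add: potential_def weight_incr_def algebra_simps)
  next
    case False
    have "0 \<le> weight t * cross_ent t q" using weight_pos[OF t(1)] cross_ent_bounds[OF q, of t] by simp
    then show ?thesis using False k t by (simp add: potential_def weight_incr_def)
  qed
  then show ?thesis using main k unfolding a_def w_def residual_def by simp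
qed

lemma regret_segment:
  assumes ab: "1 \<le> a" "a \<le> b" "b \<le> T + 1" and q: "is_dist N q"
    and good: "\<forall>t\<in>{a..<b}. xs t \<in> {1..N} \<and> 0 < q (xs t)"
  shows "(\<Sum>t\<in>{a..<b}. ln (1 / PS (t - 1) (xs t)) - ln (1 / q (xs t)))
     \<le> potential T (a - 1) q - potential T (b - 1) q + (\<Sum>t\<in>{a..<b}. log_bound T * weight_incr T t + residual t)"
  using ab good
proof (induction b)
  case 0
  then show ?case by simp
next
  case (Suc b)
  show ?case
  proof (cases "a = Suc b")
    case False
    then have "a \<le> b" using Suc by simp
    then have "ln (1 / PS (b - 1) (xs b)) - ln (1 / q (xs b))
        \<le> potential T (b - 1) q - potential T b q + log_bound T * weight_incr T b + residual b"
      using Suc.prems by (intro regret_step q) auto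
    then show ?thesis using Suc \<open>a \<le> b\<close> by (simp add: sum.atLeastLessThan_Suc)
  qed simp
qed

lemma potential_jump_le:
  assumes \<tau>: "1 \<le> \<tau>" "\<tau> < T" and q: "is_dist N q" and q': "is_dist N q'"
  shows "potential T \<tau> q' - potential T \<tau> q \<le> K T * (\<Sum>x=1..N. \<bar>q' x - q x\<bar>)"
proof -
  define D where "D = (\<Sum>x=1..N. \<bar>q' x - q x\<bar>)"
  have D: "0 \<le> D" unfolding D_def by (intro sum_nonneg) auto
  have "potential T \<tau> q' - potential T \<tau> q = weight (Suc \<tau>) * (cross_ent \<tau> q' - cross_ent \<tau> q)"
    using \<tau> by (simp add: potential_def right_diff_distrib)
  also have "\<dots> \<le> weight (Suc \<tau>) * (log_bound \<tau> / 2 * D)"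
    using cross_ent_diff_le[OF q q', of \<tau>] weight_pos[of "Suc \<tau>"] \<tau>
    unfolding D_def by (intro mult_left_mono) (auto simp: max_def)
  also have "\<dots> \<le> weight (Suc \<tau>) * log_bound (Suc \<tau>) / 2 * D"
    using log_bound_mono[of \<tau> "Suc \<tau>"] weight_pos[of "Suc \<tau>"] D
    by (simp add: mult_left_mono mult_right_mono)
  also have "\<dots> \<le> sqrt (2 * real N * real (Suc \<tau>) * log_bound (Suc \<tau>)) * D"
    using weight_mult_log_bound_le[of "Suc \<tau>"] log_bound_le_sqrt[of "Suc \<tau>"] D
    by (intro mult_right_mono) auto
  also have "\<dots> \<le> K T * D"
    using sqrt_le_K[of "Suc \<tau>" T] \<tau> D by (intro mult_right_mono) auto
  finally show ?thesis unfolding D_def .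
qed

lemma regret_segments:
  assumes pws: "is_PWS N T n ts q" and xs: "\<forall>t\<in>{1..T}. xs t \<in> {1..N}"
    and pos: "\<forall>i\<in>{1..n}. \<forall>t\<in>{ts i..<ts (i + 1)}. 0 < q i (xs t)"
  shows "(\<Sum>t=1..T. ln (1 / PS (t - 1) (xs t))) - (\<Sum>i=1..n. \<Sum>t\<in>{ts i..<ts (i + 1)}. ln (1 / q i (xs t)))
    \<le> (\<Sum>i=1..n. potential T (ts i - 1) (q i) - potential T (ts (i + 1) - 1) (q i))
      + (\<Sum>t=1..T. log_bound T * weight_incr T t + residual t)"
proof -
  have "(\<Sum>t=1..T. ln (1 / PS (t - 1) (xs t))) - (\<Sum>i=1..n. \<Sum>t\<in>{ts i..<ts (i + 1)}. ln (1 / q i (xs t)))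
      = (\<Sum>i=1..n. \<Sum>t\<in>{ts i..<ts (i + 1)}. ln (1 / PS (t - 1) (xs t)) - ln (1 / q i (xs t)))"
    using sum_over_PWS_segments[OF pws, of "\<lambda>t. ln (1 / PS (t - 1) (xs t))"] by (simp add: sum_subtractf)
  also have "\<dots> \<le> (\<Sum>i=1..n. potential T (ts i - 1) (q i) - potential T (ts (i + 1) - 1) (q i)
                    + (\<Sum>t\<in>{ts i..<ts (i + 1)}. log_bound T * weight_incr T t + residual t))"
  proof (rule sum_mono)
    fix i assume i: "i \<in> {1..n}"
    have seg: "1 \<le> ts i" "ts i \<le> ts (i + 1)" "ts (i + 1) \<le> T + 1"
      using i pws is_PWS_boundary_bounds[OF pws, of i] is_PWS_boundary_bounds[OF pws, of "i + 1"]
      unfolding is_PWS_def by (auto intro: less_imp_le)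
    moreover have "is_dist N (q i)" using i pws unfolding is_PWS_def by auto
    moreover have "\<forall>t\<in>{ts i..<ts (i + 1)}. xs t \<in> {1..N} \<and> 0 < q i (xs t)"
      using i seg xs pos by auto
    ultimately show "(\<Sum>t\<in>{ts i..<ts (i + 1)}. ln (1 / PS (t - 1) (xs t)) - ln (1 / q i (xs t)))
        \<le> potential T (ts i - 1) (q i) - potential T (ts (i + 1) - 1) (q i)
          + (\<Sum>t\<in>{ts i..<ts (i + 1)}. log_bound T * weight_incr T t + residual t)"
      by (intro regret_segment) auto
  qed
  also have "\<dots> = (\<Sum>i=1..n. potential T (ts i - 1) (q i) - potential T (ts (i + 1) - 1) (q i))
      + (\<Sum>t=1..T. log_bound T * weight_incr T t + residual t)"
    by (simp only: sum.distrib sum_over_PWS_segments[OF pws])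
  finally show ?thesis .
qed


lemma regret_bound:
  assumes pws: "is_PWS N T n ts q" and xs: "\<forall>t\<in>{1..T}. xs t \<in> {1..N}"
    and pos: "\<forall>i\<in>{1..n}. \<forall>t\<in>{ts i..<ts (i + 1)}. 0 < q i (xs t)"
  shows "(\<Sum>t=1..T. ln (1 / PS (t - 1) (xs t))) - (\<Sum>i=1..n. \<Sum>t\<in>{ts i..<ts (i + 1)}. ln (1 / q i (xs t)))
    \<le> K T * (1 + complexity_PWS N n q) + log_bound T + ln (real T + 1) + (\<Sum>y=1..N. ln (1 / p y))"
proof -
  obtain m where n: "n = Suc m" using pws unfolding is_PWS_def by (cases n) auto
  have ts1: "ts 1 = 1" and tsn: "ts (n + 1) = T + 1" and qd: "\<forall>i\<in>{1..n}. is_dist N (q i)"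
    using pws unfolding is_PWS_def by auto
  have T: "1 \<le> T" using is_PWS_boundary_bounds(2)[OF pws, of 1] ts1 n by simp
  define P where "P i j = potential T (ts j - 1) (q i)" for i j
  define D where "D i = (\<Sum>x=1..N. \<bar>q (i + 1) x - q i x\<bar>)" for i
  have "(\<Sum>i=1..n. P i i - P i (i + 1)) = P 1 1 - P n (n + 1) + (\<Sum>i=1..m. P (i + 1) (i + 1) - P i (i + 1))"
    using sum_diff_shift[of "\<lambda>i. P i i" "\<lambda>i. P i (i + 1)" m] n by simp
  moreover have "P 1 1 \<le> weight 1 * log_bound T"
    using cross_ent_bounds[of "q 1" 0] qd n log_bound_mono[OF T] weight_pos[of 1] T ts1
    by (simp add: P_def potential_def mult_left_mono)
  moreover have "P n (n + 1) = 0" using tsn by (simp add: P_def potential_def)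
  moreover have "(\<Sum>i=1..m. P (i + 1) (i + 1) - P i (i + 1)) \<le> (\<Sum>i=1..m. K T * D i)"
  proof (rule sum_mono)
    fix i assume i: "i \<in> {1..m}"
    have "1 \<le> ts (i + 1) - 1" "ts (i + 1) - 1 < T"
      using i n is_PWS_boundary_bounds[OF pws, of "i + 1"] by auto
    then show "P (i + 1) (i + 1) - P i (i + 1) \<le> K T * D i"
      using i n qd unfolding P_def D_def by (intro potential_jump_le) auto
  qed
  moreover have "(\<Sum>t=1..T. log_bound T * weight_incr T t + residual t)
      \<le> log_bound T * (weight T - weight 1) + (\<Sum>y=1..N. ln (1 / p y)) + K T + ln (real T + 1)"
    using sum_residual_le[OF xs] sum_weight_incr[OF T] by (simp add: sum.distrib flip: sum_distrib_left)
  moreover have "weight 1 * log_bound T + log_bound T * (weight T - weight 1) \<le> log_bound T + K T"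
    using weight_mult_log_bound_le[OF T] sqrt_le_K[of T T] by (simp add: algebra_simps)
  moreover have "K T * (1 + complexity_PWS N n q) = 2 * K T + (\<Sum>i=1..m. K T * D i)"
    using n by (simp add: complexity_PWS_def D_def sum_distrib_left algebra_simps)
  ultimately show ?thesis using regret_segments[OF pws xs pos] unfolding P_def by linarith
qed

lemma code_len_PS_eq:
  assumes "\<forall>t\<in>{1..T}. xs t \<in> {1..N}"
  shows "code_len_PS N (alpha_thm N) eps_thm p xs T = ereal (\<Sum>t=1..T. ln (1 / PS (t - 1) (xs t)))"
proof -
  have "code_len_PS N (alpha_thm N) eps_thm p xs T = (\<Sum>t=1..T. ereal (ln (1 / PS (t - 1) (xs t))))"
    unfolding code_len_PS_def PS_def[symmetric]
  proof (rule sum.cong[OF refl])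
    fix t assume "t \<in> {1..T}"
    then have "0 < PS (t - 1) (xs t)" using assms PS_pos by auto
    then show "nlog (PS (t - 1) (xs t)) = ereal (ln (1 / PS (t - 1) (xs t)))" by (simp add: nlog_def)
  qed
  then show ?thesis by simp
qed

lemma sum_ln_inverse_p_le: "(\<Sum>y=1..N. ln (1 / p y)) \<le> real N * ln (2 * real N)"
proof -
  have "(\<Sum>y=1..N. ln (1 / p y)) \<le> (\<Sum>y=1..N. ln (2 * real N))"
  proof (rule sum_mono)
    fix y assume y: "y \<in> {1..N}"
    have "1 / (2 * real N) \<le> eps_thm 1 / (real N - 1)"
      using N_ge_2 by (simp add: eps_thm_def divide_simps)
    also have "\<dots> \<le> p y" using p_lower y by simp
    finally have "1 / p y \<le> 2 * real N"
      using N_ge_2 PS_pos[OF y, of 0] by (simp add: PS_0 field_simps)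
    then show "ln (1 / p y) \<le> ln (2 * real N)"
      using PS_pos[OF y, of 0] by (intro ln_mono) (auto simp: PS_0)
  qed
  then show ?thesis by simp
qed

end

theorem theorem2:
  fixes N :: nat and p :: "nat \<Rightarrow> real"
  assumes "N \<ge> 2"
    and "is_dist N p"
    and "\<forall>x\<in>{1..N}. p x \<ge> eps_thm 1 / (real N - 1)"
  shows "\<exists>c T0. \<forall>T \<ge> T0. \<forall>n ts q xs.
           T \<ge> 2 \<and> is_PWS N T n ts q \<and> (\<forall>t\<in>{1..T}. xs t \<in> {1..N}) \<longrightarrow>
           code_len_PS N (alpha_thm N) eps_thm p xs T
             \<le> code_len_PWS n ts q xs
               + ereal (sqrt (2 * real N * (real T + 1) * ln (real N * (real T + 1)))
                          * (1 + complexity_PWS N n q)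
                        + sqrt (128 * real N * real T / ln (real T))
                        + c * real N * ln (real T))"
proof (intro exI[of _ "4 + 2 * ln (2 * real N) / ln 2"] exI[of _ 0] allI impI)
  fix T n ts q xs
  assume "T \<ge> 2 \<and> is_PWS N T n ts q \<and> (\<forall>t\<in>{1..T}. xs t \<in> {1..N})"
  then have T: "2 \<le> T" and pws: "is_PWS N T n ts q" and xs: "\<forall>t\<in>{1..T}. xs t \<in> {1..N}"
    by auto
  interpret probability_smoothing N p xs using assms by unfold_locales
  show "code_len_PS N (alpha_thm N) eps_thm p xs T
      \<le> code_len_PWS n ts q xs
        + ereal (sqrt (2 * real N * (real T + 1) * ln (real N * (real T + 1))) * (1 + complexity_PWS N n q)
          + sqrt (128 * real N * real T / ln (real T))
          + (4 + 2 * ln (2 * real N) / ln 2) * real N * ln (real T))"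
  proof (cases "\<forall>i\<in>{1..n}. \<forall>t\<in>{ts i..<ts (i + 1)}. 0 < q i (xs t)")
    case True
    then show ?thesis
      using regret_bound[OF pws xs True] log_terms_le[OF assms(1) T sum_ln_inverse_p_le]
      unfolding code_len_PS_eq[OF xs] code_len_PWS_finite[of n ts q xs, OF True] K_def log_bound_def
      by simp
  next
    case False
    then show ?thesis using code_len_PWS_infinite by fastforce
  qed
qed

end
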